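(* $\mathrm{rk}(|W\rangle^{\otimes 2})\le 8$, where $|W\rangle=|001\rangle+|010\rangle+|100\rangle$ is the three-qubit W state (one qubit each for parties $A,B,C$, normalization irrelevant) and $|W\rangle^{\otimes2}$ is viewed as a tripartite tensor in $(\mathbb{C}^2\otimes\mathbb{C}^2)_A\otimes(\mathbb{C}^2\otimes\mathbb{C}^2)_B\otimes(\mathbb{C}^2\otimes\mathbb{C}^2)_C$, each party holding its qubits from both copies.
   Context: The tensor rank $\mathrm{rk}(|\phi\rangle)$ of $|\phi\rangle\in H_A\otimes H_B\otimes H_C$ is the minimum $r$ such that $|\phi\rangle=\sum_{j=1}^r|a_j\rangle|b_j\rangle|c_j\rangle$ with $|a_j\rangle\in H_A,|b_j\rangle\in H_B,|c_j\rangle\in H_C$. *)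

theory Defs
  imports Complex_Main
begin

text \<open>A tripartite tensor in C^d1 (x) C^d2 (x) C^d3 is represented by its coefficient
  function T i j k (only indices i < d1, j < d2, k < d3 are meaningful).\<close>

definition has_rank_decomp ::
  "nat \<Rightarrow> nat \<Rightarrow> nat \<Rightarrow> (nat \<Rightarrow> nat \<Rightarrow> nat \<Rightarrow> complex) \<Rightarrow> nat \<Rightarrow> bool" where
  "has_rank_decomp d1 d2 d3 T r \<longleftrightarrow>
     (\<exists>a b c :: nat \<Rightarrow> nat \<Rightarrow> complex.
        \<forall>i<d1. \<forall>j<d2. \<forall>k<d3. T i j k = (\<Sum>l<r. a l i * b l j * c l k))"

definition tensor_rank ::
  "nat \<Rightarrow> nat \<Rightarrow> nat \<Rightarrow> (nat \<Rightarrow> nat \<Rightarrow> nat \<Rightarrow> complex) \<Rightarrow> nat" where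
  "tensor_rank d1 d2 d3 T = (LEAST r. has_rank_decomp d1 d2 d3 T r)"

definition W_state :: "nat \<Rightarrow> nat \<Rightarrow> nat \<Rightarrow> complex" where
  "W_state x y z = (if x + y + z = 1 then 1 else 0)"

text \<open>|W>^{(x)2} as a tensor in (C^2(x)C^2)_A (x) (C^2(x)C^2)_B (x) (C^2(x)C^2)_C:
  party index i < 4 encodes (qubit of copy 1, qubit of copy 2) as i = 2*x1 + x2.\<close>
definition W_squared :: "nat \<Rightarrow> nat \<Rightarrow> nat \<Rightarrow> complex" where
  "W_squared i j k = W_state (i div 2) (j div 2) (k div 2) * W_state (i mod 2) (j mod 2) (k mod 2)"

end

theory Submission
  imports Defs
begin

text \<open>Writing a party index as \<open>i = 2 x\<^sub>1 + x\<^sub>2\<close>, the tensor \<open>|W\<rangle>\<^sup>\<otimes>\<^sup>2\<close> is symmetric, and its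
  cubic form is \<open>3 y\<^sub>0\<^sup>2 y\<^sub>3 + 6 y\<^sub>0 y\<^sub>1 y\<^sub>2\<close>. Both monomials have short Waring decompositions:
  \<open>3 y\<^sub>0\<^sup>2 y\<^sub>3 = ((y\<^sub>0 + y\<^sub>3)\<^sup>3 - (y\<^sub>0 - y\<^sub>3)\<^sup>3) / 2 - y\<^sub>3\<^sup>3\<close> and
  \<open>6 y\<^sub>0 y\<^sub>1 y\<^sub>2 = (\<Sum>\<epsilon>\<^sub>1 \<epsilon>\<^sub>2 \<in> {\<plusminus>1}. \<epsilon>\<^sub>1 \<epsilon>\<^sub>2 (y\<^sub>0 + \<epsilon>\<^sub>1 y\<^sub>1 + \<epsilon>\<^sub>2 y\<^sub>2)\<^sup>3) / 4\<close>.
  Together they express the tensor as a sum of seven cubes \<open>v \<otimes> v \<otimes> v\<close>, so its rank is at most 7.\<close>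

lemma tensor_rank_le:
  assumes "has_rank_decomp d1 d2 d3 T r"
  shows "tensor_rank d1 d2 d3 T \<le> r"
  unfolding tensor_rank_def using assms by (rule Least_le)

lemma has_rank_decomp_symmetric:
  assumes "\<forall>i<d. \<forall>j<d. \<forall>k<d. T i j k = (\<Sum>l<r. c l * v l i * v l j * v l k)"
  shows "has_rank_decomp d d d T r"
  unfolding has_rank_decomp_def
proof (intro exI)
  show "\<forall>i<d. \<forall>j<d. \<forall>k<d. T i j k = (\<Sum>l<r. (c l * v l i) * v l j * v l k)"
    using assms by (simp add: mult.assoc)
qed

definition W_squared_waring_vec :: "nat \<Rightarrow> nat \<Rightarrow> complex" where
  "W_squared_waring_vec l i =
     [[1, 0, 0, 1], [1, 0, 0, -1], [0, 0, 0, 1],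
      [1, 1, 1, 0], [1, 1, -1, 0], [1, -1, 1, 0], [1, -1, -1, 0]] ! l ! i"

definition W_squared_waring_coeff :: "nat \<Rightarrow> complex" where
  "W_squared_waring_coeff l = [1/2, -1/2, -1, 1/4, -1/4, -1/4, 1/4] ! l"

lemma all_less_four_iff: "(\<forall>i<(4::nat). P i) \<longleftrightarrow> P 0 \<and> P 1 \<and> P 2 \<and> P 3"
  by (auto simp: less_Suc_eq numeral_eq_Suc)

lemma W_squared_waring:
  "\<forall>i<4. \<forall>j<4. \<forall>k<4. W_squared i j k =
     (\<Sum>l<7. W_squared_waring_coeff l * W_squared_waring_vec l i
              * W_squared_waring_vec l j * W_squared_waring_vec l k)"
  unfolding all_less_four_iff
  by (simp add: W_squared_def W_state_def,
      simp add: W_squared_waring_vec_def W_squared_waring_coeff_def lessThan_Suc eval_nat_numeral)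

theorem lemma1:
  shows "tensor_rank 4 4 4 W_squared \<le> 8"
proof -
  have "has_rank_decomp 4 4 4 W_squared 7"
    using W_squared_waring by (rule has_rank_decomp_symmetric)
  then have "tensor_rank 4 4 4 W_squared \<le> 7"
    by (rule tensor_rank_le)
  then show ?thesis by simp
qed

end
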